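(* Let $p$ be a prime, $0<\alpha\le1$, and let $S\subseteq\mathbb{Z}_p$ have the property that all pairwise sums of different elements of $S$ are distinct (i.e., if $s_1,s_2,s_3,s_4\in S$ with $s_1\neq s_2$, $s_3\neq s_4$ and $s_1+s_2=s_3+s_4$ in $\mathbb{Z}_p$, then $\{s_1,s_2\}=\{s_3,s_4\}$). Then $$\mathcal{C}^{\mathrm{bsgs1}}_\alpha(S)>(\alpha|S|/\sqrt2)^{2/3}.$$
   Context: The BSGS-1 $\alpha$-complexity $\mathcal{C}^{\mathrm{bsgs1}}_\alpha(S)$ of $S\subseteq\mathbb{Z}_p$ is the smallest integer $n$ such that there exist $X,Y\subseteq\mathbb{Z}_p$ with $|X|=|Y|=n$ and $|S\cap(X-Y)|\geq\alpha|S|$, where $X-Y=\{x-y\mid x\in X,y\in Y\}$ (computed in $\mathbb{Z}_p$). *)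

theory Defs
  imports "HOL-Analysis.Analysis"
begin

text \<open>Z_p is modelled by the residues {0..<p} :: int set; arithmetic is taken mod p.\<close>

definition diffset_mod :: "int \<Rightarrow> int set \<Rightarrow> int set \<Rightarrow> int set" where
  "diffset_mod p X Y = {(x - y) mod p | x y. x \<in> X \<and> y \<in> Y}"

definition bsgs1_complexity :: "int \<Rightarrow> real \<Rightarrow> int set \<Rightarrow> nat" where
  "bsgs1_complexity p \<alpha> S = (LEAST n. \<exists>X Y. X \<subseteq> {0..<p} \<and> Y \<subseteq> {0..<p} \<and>
      card X = n \<and> card Y = n \<and>
      real (card (S \<inter> diffset_mod p X Y)) \<ge> \<alpha> * real (card S))"

definition distinct_pair_sums_mod :: "int \<Rightarrow> int set \<Rightarrow> bool" where
  "distinct_pair_sums_mod p S \<longleftrightarrow> (\<forall>s1\<in>S. \<forall>s2\<in>S. \<forall>s3\<in>S. \<forall>s4\<in>S.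
      s1 \<noteq> s2 \<longrightarrow> s3 \<noteq> s4 \<longrightarrow> (s1 + s2) mod p = (s3 + s4) mod p \<longrightarrow>
      {s1, s2} = {s3, s4})"

end

theory Submission
  imports Defs
begin

text \<open>Choose X, Y witnessing the complexity n and, for every element of S covered by X - Y,
  one pair (x, y) representing it. If two such pairs (x1, y1), (x2, y2) had the "crossed" pairs
  (x1, y2), (x2, y1) chosen as well, the four represented elements would satisfy
  (x1 - y1) + (x2 - y2) = (x1 - y2) + (x2 - y1), contradicting distinctness of pair sums.
  So the chosen pairs form a rectangle-free subset of the n \<times> n grid X \<times> Y, which by the
  Kovari-Sos-Turan counting argument has fewer than sqrt 2 * n^(3/2) elements; there are at
  least \<alpha> |S| of them.\<close>

definition rectangle_free :: "('a \<times> 'b) set \<Rightarrow> bool" where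
  "rectangle_free P \<longleftrightarrow> (\<forall>x1 x2 y1 y2. (x1, y1) \<in> P \<longrightarrow> (x1, y2) \<in> P \<longrightarrow>
      (x2, y1) \<in> P \<longrightarrow> (x2, y2) \<in> P \<longrightarrow> x1 = x2 \<or> y1 = y2)"

lemma card_off_diagonal:
  assumes "finite A"
  shows "card (A \<times> A - Id) + card A = card A * card A"
proof -
  have "Id_on A = (\<lambda>a. (a, a)) ` A"
    by auto
  then have "card (Id_on A) = card A"
    by (simp add: card_image inj_on_def)
  moreover have "A \<times> A - Id = A \<times> A - Id_on A" "Id_on A \<subseteq> A \<times> A"
    by auto
  ultimately show ?thesis
    using assms card_mono[of "A \<times> A" "Id_on A"] card_Diff_subset[of "Id_on A" "A \<times> A"]
    by (simp add: card_cartesian_product finite_subset)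
qed

lemma card_rectangle_free_sq_le:
  assumes "finite X" "finite Y" "P \<subseteq> X \<times> Y" "rectangle_free P"
  shows "real (card P) ^ 2 \<le> real (card X) * (real (card P) + real (card Y) * (real (card Y) - 1))"
proof -
  let ?N = "\<lambda>x. P `` {x}"
  have finite_N: "finite (?N x)" for x
    using assms(2,3) by (auto intro: finite_subset[of _ Y])
  have "Sigma X ?N = P"
    using assms(3) by auto
  then have card_P: "card P = (\<Sum>x\<in>X. card (?N x))"
    using card_SigmaI[OF assms(1), of ?N] finite_N by simp
  define R where "R = Sigma X (\<lambda>x. ?N x \<times> ?N x - Id)"
  have "inj_on snd R"
    using assms(4) by (auto simp: R_def inj_on_def rectangle_free_def)
  moreover have "snd ` R \<subseteq> Y \<times> Y - Id"
    using assms(3) by (auto simp: R_def)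
  ultimately have "card R \<le> card (Y \<times> Y - Id)"
    using assms(2) by (intro card_inj_on_le) auto
  moreover have "card R + card P = (\<Sum>x\<in>X. card (?N x) ^ 2)"
  proof -
    have "card R = (\<Sum>x\<in>X. card (?N x \<times> ?N x - Id))"
      unfolding R_def using assms(1) finite_N by (intro card_SigmaI) auto
    then show ?thesis
      using card_P card_off_diagonal[OF finite_N]
      by (simp add: sum.distrib[symmetric] power2_eq_square)
  qed
  ultimately have "(\<Sum>x\<in>X. card (?N x) ^ 2) + card Y \<le> card P + card Y * card Y"
    using card_off_diagonal[OF assms(2)] by linarith
  then have sum_sq: "(\<Sum>x\<in>X. real (card (?N x)) ^ 2) \<le> real (card P) + real (card Y) * (real (card Y) - 1)"
    unfolding of_nat_le_iff[where 'a = real, symmetric] by (simp add: right_diff_distrib)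
  have "real (card P) ^ 2 = (\<Sum>x\<in>X. real (card (?N x))) ^ 2"
    using card_P by simp
  also have "\<dots> \<le> (\<Sum>x\<in>X. real (card (?N x)) ^ 2) * real (card X)"
    by (rule sum_squared_le_sum_of_squares)
  also have "\<dots> \<le> real (card X) * (real (card P) + real (card Y) * (real (card Y) - 1))"
    using sum_sq by (metis mult.commute mult_left_mono of_nat_0_le_iff)
  finally show ?thesis .
qed

lemma card_rectangle_free_sq_less:
  assumes "finite X" "finite Y" "P \<subseteq> X \<times> Y" "rectangle_free P"
    and "card X = n" "card Y = n" "P \<noteq> {}"
  shows "real (card P) ^ 2 < 2 * real n ^ 3"
proof -
  have "card P \<le> n * n"
    using assms(1-3,5,6) card_mono[of "X \<times> Y" P] by (simp add: card_cartesian_product)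
  then have le: "real (card P) \<le> real n * real n"
    by (metis of_nat_le_iff of_nat_mult)
  have "X \<noteq> {}"
    using assms(3,7) by auto
  then have "n > 0"
    using assms(1,5) by auto
  have "real (card P) ^ 2 \<le> real n * (real (card P) + real n * (real n - 1))"
    using card_rectangle_free_sq_le[OF assms(1-4)] assms(5,6) by simp
  also have "\<dots> \<le> real n * (real n * real n + real n * (real n - 1))"
    using le by (simp add: mult_left_mono)
  also have "\<dots> = 2 * real n ^ 3 - real n ^ 2"
    by (simp add: algebra_simps power2_eq_square power3_eq_cube)
  also have "\<dots> < 2 * real n ^ 3"
    using \<open>n > 0\<close> by simp
  finally show ?thesis .
qed

lemma powr_two_thirds_less:
  fixes a n :: real
  assumes "0 \<le> a" "a ^ 2 < 2 * n ^ 3"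
  shows "(a / sqrt 2) powr (2/3) < n"
proof -
  define c where "c = a / sqrt 2"
  have "0 \<le> c" "c ^ 2 < n ^ 3"
    using assms by (simp_all add: c_def power_divide)
  have "0 < n ^ 3"
    using assms(2) zero_le_power2[of a] by linarith
  then have "0 < n"
    by (simp add: zero_less_power_eq)
  have "(c powr (2/3)) ^ 3 = c ^ 2"
  proof (cases "c = 0")
    case False
    then have "0 < c"
      using \<open>0 \<le> c\<close> by simp
    have "(c powr (2/3)) ^ 3 = (c powr (2/3)) powr (real 3)"
      using \<open>0 < c\<close> by (simp only: powr_realpow powr_gt_zero)
    also have "\<dots> = c powr (real 2)"
      by (simp add: powr_powr)
    also have "\<dots> = c ^ 2"
      using \<open>0 < c\<close> by (rule powr_realpow)
    finally show ?thesis .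
  qed simp
  with \<open>c ^ 2 < n ^ 3\<close> have "(c powr (2/3)) ^ 3 < n ^ 3"
    by simp
  then show ?thesis
    unfolding c_def[symmetric] using \<open>0 < n\<close> power_less_imp_less_base by fastforce
qed

lemma diffset_mod_eq_image:
  "diffset_mod p X Y = (\<lambda>(x, y). (x - y) mod p) ` (X \<times> Y)"
  by (auto simp: diffset_mod_def)

lemma bij_betw_inv_into_image:
  assumes "T \<subseteq> f ` A"
  shows "bij_betw f (inv_into A f ` T) T"
proof (rule bij_betw_imageI)
  have inverse: "f (inv_into A f t) = t" if "t \<in> T" for t
    using assms that by (blast intro: f_inv_into_f)
  show "inj_on f (inv_into A f ` T)"
    by (rule inj_onI) (auto simp: inverse)
  show "f ` inv_into A f ` T = T"
    by (simp add: image_image inverse cong: image_cong)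
qed

lemma rectangle_free_if_distinct_pair_sums_mod:
  assumes "distinct_pair_sums_mod p S"
    and "inj_on (\<lambda>(x, y). (x - y) mod p) P" "(\<lambda>(x, y). (x - y) mod p) ` P \<subseteq> S"
  shows "rectangle_free P"
  unfolding rectangle_free_def
proof (intro allI impI)
  fix x1 x2 y1 y2
  assume in_P: "(x1, y1) \<in> P" "(x1, y2) \<in> P" "(x2, y1) \<in> P" "(x2, y2) \<in> P"
  let ?t = "\<lambda>x y. (x - y) mod p"
  have inj: "a = c \<and> b = e" if "(a, b) \<in> P" "(c, e) \<in> P" "?t a b = ?t c e" for a b c e
    using inj_onD[OF assms(2), of "(a, b)" "(c, e)"] that by simp
  have in_S: "?t x1 y1 \<in> S" "?t x2 y2 \<in> S" "?t x1 y2 \<in> S" "?t x2 y1 \<in> S"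
    using in_P assms(3) by auto
  have "x1 - y1 + (x2 - y2) = x1 - y2 + (x2 - y1)"
    by simp
  then have same_sum: "(?t x1 y1 + ?t x2 y2) mod p = (?t x1 y2 + ?t x2 y1) mod p"
    by (simp only: mod_add_eq)
  show "x1 = x2 \<or> y1 = y2"
  proof (rule ccontr)
    assume corner: "\<not> (x1 = x2 \<or> y1 = y2)"
    then have ne: "?t x1 y1 \<noteq> ?t x2 y2" "?t x1 y2 \<noteq> ?t x2 y1"
      using inj[OF in_P(1,4)] inj[OF in_P(2,3)] by auto
    have "{?t x1 y1, ?t x2 y2} = {?t x1 y2, ?t x2 y1}"
      by (rule assms(1)[unfolded distinct_pair_sums_mod_def, rule_format, OF in_S ne same_sum])
    then have "?t x1 y1 = ?t x1 y2 \<or> ?t x1 y1 = ?t x2 y1"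
      by (auto simp: doubleton_eq_iff)
    then show False
      using corner inj[OF in_P(1,2)] inj[OF in_P(1,3)] by auto
  qed
qed

lemma bsgs1_complexity_attained:
  assumes "S \<subseteq> {0..<p}" "\<alpha> \<le> 1"
  obtains X Y where "X \<subseteq> {0..<p}" "Y \<subseteq> {0..<p}"
    "card X = bsgs1_complexity p \<alpha> S" "card Y = bsgs1_complexity p \<alpha> S"
    "\<alpha> * real (card S) \<le> real (card (S \<inter> diffset_mod p X Y))"
proof -
  have "S \<subseteq> diffset_mod p {0..<p} {0..<p}"
    using assms(1) by (force simp: diffset_mod_def)
  then have "\<alpha> * real (card S) \<le> real (card (S \<inter> diffset_mod p {0..<p} {0..<p}))"
    using assms(2) mult_right_mono[of \<alpha> 1 "real (card S)"] by (simp add: Int_absorb2)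
  then have "\<exists>n X Y. X \<subseteq> {0..<p} \<and> Y \<subseteq> {0..<p} \<and> card X = n \<and> card Y = n \<and>
      real (card (S \<inter> diffset_mod p X Y)) \<ge> \<alpha> * real (card S)"
    by blast
  from LeastI_ex[OF this] show ?thesis
    using that unfolding bsgs1_complexity_def by blast
qed

theorem theorem6:
  fixes p :: int and \<alpha> :: real and S :: "int set"
  assumes "prime p" and "0 < \<alpha>" and "\<alpha> \<le> 1"
    and "S \<subseteq> {0..<p}" and "S \<noteq> {}"
    and "distinct_pair_sums_mod p S"
  shows "real (bsgs1_complexity p \<alpha> S) > (\<alpha> * real (card S) / sqrt 2) powr (2/3)"
proof -
  let ?n = "bsgs1_complexity p \<alpha> S" and ?d = "\<lambda>(x, y). (x - y) mod p"
  obtain X Y where XY: "X \<subseteq> {0..<p}" "Y \<subseteq> {0..<p}" "card X = ?n" "card Y = ?n"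
    and covered: "\<alpha> * real (card S) \<le> real (card (S \<inter> diffset_mod p X Y))"
    using bsgs1_complexity_attained[OF assms(4,3)] .
  define P where "P = inv_into (X \<times> Y) ?d ` (S \<inter> diffset_mod p X Y)"
  have "S \<inter> diffset_mod p X Y \<subseteq> ?d ` (X \<times> Y)"
    by (simp add: diffset_mod_eq_image)
  then have P: "P \<subseteq> X \<times> Y" "bij_betw ?d P (S \<inter> diffset_mod p X Y)"
    unfolding P_def by (blast intro: inv_into_into, rule bij_betw_inv_into_image)
  have "rectangle_free P"
    using P(2) by (intro rectangle_free_if_distinct_pair_sums_mod[OF assms(6)]) (auto simp: bij_betw_def)
  have "0 < \<alpha> * real (card S)"
    using assms(2,4,5) by (simp add: card_gt_0_iff finite_subset)
  moreover have \<alpha>S_le: "\<alpha> * real (card S) \<le> real (card P)"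
    using covered bij_betw_same_card[OF P(2)] by simp
  ultimately have "P \<noteq> {}"
    by auto
  have "real (card P) ^ 2 < 2 * real ?n ^ 3"
    using XY \<open>rectangle_free P\<close> \<open>P \<noteq> {}\<close> P(1)
    by (intro card_rectangle_free_sq_less[of X Y]) (auto intro: finite_subset)
  moreover have "(\<alpha> * real (card S)) ^ 2 \<le> real (card P) ^ 2"
    using \<alpha>S_le \<open>0 < \<alpha> * real (card S)\<close> by (simp add: power_mono)
  ultimately have "(\<alpha> * real (card S)) ^ 2 < 2 * real ?n ^ 3"
    by linarith
  then show ?thesis
    using \<open>0 < \<alpha> * real (card S)\<close> by (intro powr_two_thirds_less) auto
qed

end
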